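(* There exist absolute constants $c_1$, $c_2$ and $c_3$ for which the following holds. Let $v \in \mathbb{R}^N$ and suppose there are $A,B>0$ and $1 \leq \alpha \leq 2$ such that for every $I \subset \{1,\dots,N\}$, $$ \Big(\sum_{i \in I} v_i^2 \Big)^{1/2} \leq A + B \sqrt{|I|}\log^{1/\alpha}\left(eN/|I|\right). $$ If $\beta \geq c_1B\max\{ \log^{1/\alpha}(c_2NB^2/A^2),1\}$ and $E_\beta = \{i: |v_i| \geq \beta \}$, then $$ |E_\beta| \leq \max \left\{ \frac{4A^2}{\beta^2}, eN \exp(-(\beta/2B)^{\alpha})\right\} \quad \text{and} \quad \Big(\sum_{i \in E_\beta} v_i^2\Big)^{1/2} \leq c_3 A. $$ *)

theory Defs
  imports Complex_Main
begin

text \<open>log^{1/alpha}(x), read as (log x)^{1/alpha} with the natural logarithm;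
  a negative logarithm is truncated to 0 (where the paper's expression is undefined).\<close>
definition logpow :: "real \<Rightarrow> real \<Rightarrow> real" where
  "logpow a x = (max 0 (ln x)) powr (1 / a)"

end

theory Submission
  imports Defs
begin

text \<open>Let E = {i. |v i| \<ge> \<beta>} and k = |E|. The hypothesis for I = E together with
  \<beta> sqrt k \<le> \<parallel>v|E\<parallel> gives \<beta> sqrt k \<le> A + B sqrt k log^(1/\<alpha>)(eN/k). If the logarithmic summand
  exceeded A, then (\<beta>/2B)^\<alpha> < u = log(eN/k), and the lower bound on \<beta> makes u \<ge> 2 log(200NB^2/A^2);
  but then k = eN e^(-u) is so small that B^2 k u^2 \<le> 64 e N B^2 e^(-3u/4) \<le> A^2, a contradiction.\<close>

lemma square_le_64_exp_quarter:
  fixes u :: real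
  assumes "u \<ge> 0"
  shows "u\<^sup>2 \<le> 64 * exp (u / 4)"
proof -
  have "u / 8 \<le> exp (u / 8)" using exp_ge_add_one_self[of "u / 8"] by linarith
  hence "(u / 8)\<^sup>2 \<le> (exp (u / 8))\<^sup>2" using assms by (intro power_mono) auto
  also have "(exp (u / 8))\<^sup>2 = exp (u / 4)" by (simp add: power2_eq_square flip: exp_add)
  finally show ?thesis by (simp add: power_divide)
qed

lemma logpow_nonneg: "logpow a x \<ge> 0"
  unfolding logpow_def by simp

lemma logpow_powr: "a > 0 \<Longrightarrow> logpow a x powr a = max 0 (ln x)"
  unfolding logpow_def powr_powr by (cases "ln x > 0") auto

lemma logpow_le_ln:
  assumes "1 \<le> a" "1 \<le> ln x"
  shows "logpow a x \<le> ln x"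
  using assms powr_mono[of "1 / a" 1 "ln x"] unfolding logpow_def by simp

lemma card_mult_square_le_sum_squares:
  fixes v :: "'a \<Rightarrow> real"
  assumes "finite E" "\<beta> \<ge> 0" "\<And>i. i \<in> E \<Longrightarrow> \<beta> \<le> \<bar>v i\<bar>"
  shows "real (card E) * \<beta>\<^sup>2 \<le> (\<Sum>i\<in>E. (v i)\<^sup>2)"
proof -
  have "(\<Sum>i\<in>E. \<beta>\<^sup>2) \<le> (\<Sum>i\<in>E. \<bar>v i\<bar>\<^sup>2)"
    using assms by (intro sum_mono power_mono) auto
  thus ?thesis by simp
qed

lemma threshold_exponent_ge:
  fixes B \<alpha> \<beta> X :: real
  assumes "B > 0" "1 \<le> \<alpha>" "\<beta> \<ge> 4 * B * max (logpow \<alpha> X) 1"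
  shows "2 * max 1 (ln X) \<le> (\<beta> / (2 * B)) powr \<alpha>"
proof -
  define m where "m = max (logpow \<alpha> X) 1"
  have m1: "m \<ge> 1" unfolding m_def by simp
  have "max 1 (ln X) \<le> max 1 (logpow \<alpha> X powr \<alpha>)"
    using assms(2) by (simp add: logpow_powr)
  also have "\<dots> \<le> m powr \<alpha>"
    using assms(2) m1 ge_one_powr_ge_zero[of m \<alpha>] unfolding m_def
    by (intro max.boundedI powr_mono2) (auto simp: logpow_nonneg)
  finally have "2 * max 1 (ln X) \<le> 2 * m powr \<alpha>" by simp
  also have "\<dots> \<le> 2 powr \<alpha> * m powr \<alpha>"
    using assms(2) powr_mono[of 1 \<alpha> 2] by (intro mult_right_mono) auto
  also have "\<dots> = (2 * m) powr \<alpha>" using m1 by (simp add: powr_mult)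
  also have "\<dots> \<le> (\<beta> / (2 * B)) powr \<alpha>"
    using assms m1 unfolding m_def by (intro powr_mono2) (auto simp: field_simps)
  finally show ?thesis .
qed

lemma log_term_le_of_large_log:
  fixes k N A B :: real
  defines "u \<equiv> ln (exp 1 * N / k)"
  assumes "k > 0" "N > 0" "A > 0" "B > 0"
    and u_ge: "0 \<le> u" "2 * ln (200 * N * B\<^sup>2 / A\<^sup>2) \<le> u"
  shows "B\<^sup>2 * k * u\<^sup>2 \<le> A\<^sup>2"
proof -
  define X where "X = 200 * N * B\<^sup>2 / A\<^sup>2"
  have X: "X > 0" unfolding X_def using assms by simp
  have k_eq: "k = exp 1 * N * exp (- u)"
    using assms by (simp add: u_def exp_minus field_simps)
  have "exp (- (3 * u / 4)) \<le> exp (- ln X)"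
    using u_ge unfolding X_def by simp
  also have "\<dots> = 1 / X" using X by (simp add: exp_minus inverse_eq_divide)
  finally have decay: "exp (- (3 * u / 4)) \<le> 1 / X" .
  have "B\<^sup>2 * k * u\<^sup>2 \<le> B\<^sup>2 * k * (64 * exp (u / 4))"
    using square_le_64_exp_quarter[OF u_ge(1)] assms by (intro mult_left_mono) auto
  also have "\<dots> = 64 * exp 1 * (B\<^sup>2 * N) * exp (- (3 * u / 4))"
    unfolding k_eq by (simp add: algebra_simps flip: exp_add)
  also have "\<dots> \<le> 64 * exp 1 * (B\<^sup>2 * N) * (1 / X)"
    using decay assms by (intro mult_left_mono) auto
  also have "\<dots> = 64 * exp 1 / 200 * A\<^sup>2"
    unfolding X_def using assms by (simp add: field_simps)
  also have "\<dots> \<le> 64 * 3 / 200 * A\<^sup>2"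
    using exp_le by (intro mult_right_mono) auto
  finally show ?thesis using zero_le_power2[of A] by linarith
qed

lemma large_coordinates_bound:
  fixes N :: nat and v :: "nat \<Rightarrow> real" and A B \<alpha> \<beta> :: real
  defines "E \<equiv> {i \<in> {1..N}. \<bar>v i\<bar> \<ge> \<beta>}"
  assumes N: "N \<ge> 1" and A: "A > 0" and B: "B > 0" and \<alpha>: "1 \<le> \<alpha>"
    and hyp: "\<forall>I. I \<subseteq> {1..N} \<and> I \<noteq> {} \<longrightarrow>
         sqrt (\<Sum>i\<in>I. (v i)\<^sup>2) \<le> A + B * sqrt (real (card I)) * logpow \<alpha> (exp 1 * real N / real (card I))"
    and \<beta>: "\<beta> \<ge> 4 * B * max (logpow \<alpha> (200 * real N * B\<^sup>2 / A\<^sup>2)) 1"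
  shows "real (card E) \<le> 4 * A\<^sup>2 / \<beta>\<^sup>2 \<and> sqrt (\<Sum>i\<in>E. (v i)\<^sup>2) \<le> 2 * A"
proof (cases "E = {}")
  case True
  then show ?thesis using A by simp
next
  case False
  define k where "k = real (card E)"
  define S where "S = (\<Sum>i\<in>E. (v i)\<^sup>2)"
  define L where "L = logpow \<alpha> (exp 1 * real N / k)"
  have finE: "finite E" and E_sub: "E \<subseteq> {1..N}" unfolding E_def by auto
  have k: "k \<ge> 1" unfolding k_def using False finE by (simp add: Suc_leI card_gt_0_iff)
  have "4 * B * 1 \<le> 4 * B * max (logpow \<alpha> (200 * real N * B\<^sup>2 / A\<^sup>2)) 1"
    using B by (intro mult_left_mono) auto
  hence \<beta>_pos: "\<beta> > 0" using \<beta> B by linarith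
  have upper: "sqrt S \<le> A + B * sqrt k * L"
    using hyp E_sub False unfolding S_def k_def L_def by auto
  have "sqrt (k * \<beta>\<^sup>2) \<le> sqrt S"
    using card_mult_square_le_sum_squares[OF finE, of \<beta> v] \<beta>_pos
    unfolding k_def S_def E_def by auto
  hence lower: "\<beta> * sqrt k \<le> sqrt S" using \<beta>_pos k by (simp add: real_sqrt_mult mult.commute)
  have small: "B * sqrt k * L \<le> A"
  proof (rule ccontr)
    assume "\<not> B * sqrt k * L \<le> A"
    hence "\<beta> * sqrt k < 2 * B * L * sqrt k" using lower upper by (simp add: algebra_simps)
    hence "\<beta> / (2 * B) < L" using k B by (simp add: field_simps)
    hence "(\<beta> / (2 * B)) powr \<alpha> < L powr \<alpha>"
      using \<beta>_pos B \<alpha> by (intro powr_less_mono2) auto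
    hence below_ln: "(\<beta> / (2 * B)) powr \<alpha> < ln (exp 1 * real N / k)"
      using \<alpha> by (auto simp: L_def logpow_powr less_max_iff_disj)
    have "2 * max 1 (ln (200 * real N * B\<^sup>2 / A\<^sup>2)) \<le> (\<beta> / (2 * B)) powr \<alpha>"
      using threshold_exponent_ge[OF B \<alpha> \<beta>] .
    hence ln_ge: "1 \<le> ln (exp 1 * real N / k)"
      "2 * ln (200 * real N * B\<^sup>2 / A\<^sup>2) \<le> ln (exp 1 * real N / k)"
      using below_ln by linarith+
    have "(B * sqrt k * L)\<^sup>2 = B\<^sup>2 * k * L\<^sup>2" using k by (simp add: power_mult_distrib)
    also have "\<dots> \<le> B\<^sup>2 * k * (ln (exp 1 * real N / k))\<^sup>2"
      unfolding L_def using logpow_le_ln[OF \<alpha> ln_ge(1)] k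
      by (intro mult_left_mono power_mono) (auto simp: logpow_nonneg)
    also have "\<dots> \<le> A\<^sup>2"
      using log_term_le_of_large_log[OF _ _ A B order.trans[OF zero_le_one ln_ge(1)] ln_ge(2)] k N by simp
    finally have "B * sqrt k * L \<le> A" by (rule power2_le_imp_le) (use A in simp)
    with \<open>\<not> B * sqrt k * L \<le> A\<close> show False ..
  qed
  have "\<beta> * sqrt k \<le> 2 * A" using lower upper small by linarith
  hence "(\<beta> * sqrt k)\<^sup>2 \<le> (2 * A)\<^sup>2" using \<beta>_pos k by (intro power_mono) auto
  hence "k \<le> 4 * A\<^sup>2 / \<beta>\<^sup>2" using \<beta>_pos k by (simp add: power_mult_distrib field_simps)
  moreover have "sqrt S \<le> 2 * A" using upper small by linarith
  ultimately show ?thesis unfolding k_def S_def by simp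
qed

theorem lemma4p2:
  shows "\<exists>c1 c2 c3 :: real. c1 > 0 \<and> c2 > 0 \<and> c3 > 0 \<and>
    (\<forall>(N::nat) (v::nat \<Rightarrow> real) (A::real) (B::real) (\<alpha>::real) (\<beta>::real).
      N \<ge> 1 \<and> A > 0 \<and> B > 0 \<and> 1 \<le> \<alpha> \<and> \<alpha> \<le> 2 \<and>
      (\<forall>I. I \<subseteq> {1..N} \<and> I \<noteq> {} \<longrightarrow>
         sqrt (\<Sum>i\<in>I. (v i)\<^sup>2) \<le> A + B * sqrt (real (card I)) * logpow \<alpha> (exp 1 * real N / real (card I))) \<and>
      \<beta> \<ge> c1 * B * max (logpow \<alpha> (c2 * real N * B\<^sup>2 / A\<^sup>2)) 1
      \<longrightarrow>
      real (card {i \<in> {1..N}. \<bar>v i\<bar> \<ge> \<beta>})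
        \<le> max (4 * A\<^sup>2 / \<beta>\<^sup>2) (exp 1 * real N * exp (- ((\<beta> / (2 * B)) powr \<alpha>))) \<and>
      sqrt (\<Sum>i\<in>{i \<in> {1..N}. \<bar>v i\<bar> \<ge> \<beta>}. (v i)\<^sup>2) \<le> c3 * A)"
proof (rule exI[of _ 4], rule exI[of _ 200], rule exI[of _ 2],
    simp only: zero_less_numeral simp_thms, intro allI impI, elim conjE, goal_cases)
  case (1 N v A B \<alpha> \<beta>)
  from large_coordinates_bound[OF 1(1-4,6,7)] show ?case by (simp add: le_max_iff_disj)
qed

end
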